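(* Let $K$ be a valued field with valuation $v_K:K\to\mathbb{T}$, let $M$ be a commutative monoid, and let $I\subseteq K[M]$ be an ideal containing no element of $M$. Let $A$ be the tropicalization of $K[M]/I$, i.e. the quotient of $\mathbb{T}[M]$ by the congruence generated by the bend relations of elements of $I$. Then $A$ has no nontrivial zero-divisors; in particular $A$ is irreducible.
   Context: $\mathbb{T}=\mathbb{R}\cup\{-\infty\}$ with addition $\max$ and multiplication the usual addition, $0_{\mathbb{T}}=-\infty$; $v_K(a)=-\infty$ iff $a=0$. For $f=\sum_i a_i[m_i]\in I$ with the $a_i\neq0$ and distinct $m_i\in M$, the bend relations of $f$ are, for each index $i$, $\sum_j v_K(a_j)[m_j]\sim\sum_{j\neq i}v_K(a_j)[m_j]$ in $\mathbb{T}[M]$. A semiring is irreducible if whenever $xy$ is nilpotent, $x$ or $y$ is nilpotent. *)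

theory Defs
  imports Complex_Main "HOL-Library.Poly_Mapping"
begin

datatype trop = NegInf | Fin real

instantiation trop :: linorder
begin
fun less_eq_trop :: "trop \<Rightarrow> trop \<Rightarrow> bool" where
  "less_eq_trop NegInf _ = True"
| "less_eq_trop (Fin _) NegInf = False"
| "less_eq_trop (Fin a) (Fin b) = (a \<le> b)"
definition less_trop :: "trop \<Rightarrow> trop \<Rightarrow> bool" where
  "less_trop x y = (x \<le> y \<and> \<not> y \<le> x)"
instance
proof
  fix x y z :: trop
  show "(x < y) = (x \<le> y \<and> \<not> y \<le> x)" by (simp add: less_trop_def)
  show "x \<le> x" by (cases x) auto
  show "x \<le> y \<Longrightarrow> y \<le> z \<Longrightarrow> x \<le> z" by (cases x; cases y; cases z) auto
  show "x \<le> y \<Longrightarrow> y \<le> x \<Longrightarrow> x = y" by (cases x; cases y) auto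
  show "x \<le> y \<or> y \<le> x" by (cases x; cases y) auto
qed
end

instantiation trop :: comm_semiring_1
begin
definition zero_trop :: trop where "zero_trop = NegInf"
definition one_trop :: trop where "one_trop = Fin 0"
definition plus_trop :: "trop \<Rightarrow> trop \<Rightarrow> trop" where "plus_trop x y = max x y"
fun times_trop :: "trop \<Rightarrow> trop \<Rightarrow> trop" where
  "times_trop (Fin a) (Fin b) = Fin (a + b)"
| "times_trop _ _ = NegInf"
instance
proof
  fix a b c :: trop
  show "a + b + c = a + (b + c)" by (simp add: plus_trop_def max.assoc)
  show "a + b = b + a" by (simp add: plus_trop_def max.commute)
  show "0 + a = a" by (cases a) (auto simp: plus_trop_def zero_trop_def max_def)
  show "a * b * c = a * (b * c)" by (cases a; cases b; cases c) auto
  show "a * b = b * a" by (cases a; cases b) auto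
  show "1 * a = a" by (cases a) (auto simp: one_trop_def)
  show "(a + b) * c = a * c + b * c"
    by (cases a; cases b; cases c) (auto simp: plus_trop_def max_def)
  show "0 * a = 0" by (simp add: zero_trop_def)
  show "a * 0 = 0" by (cases a) (auto simp: zero_trop_def)
  show "(0::trop) \<noteq> 1" by (simp add: zero_trop_def one_trop_def)
qed
end

definition valuation :: "('k::field \<Rightarrow> trop) \<Rightarrow> bool" where
  "valuation v \<longleftrightarrow>
     (\<forall>a. v a = NegInf \<longleftrightarrow> a = 0) \<and>
     (\<forall>a b. v (a * b) = v a * v b) \<and>
     (\<forall>a b. v (a + b) \<le> max (v a) (v b))"

text \<open>K[M] is rendered as finitely supported maps M to K, with M a commutative monoid written additively
  (so the basis element [m] is \<open>Poly_Mapping.single m 1\<close>); T[M] likewise with coefficients in trop.\<close>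

definition is_ideal :: "'a::comm_ring_1 set \<Rightarrow> bool" where
  "is_ideal I \<longleftrightarrow> 0 \<in> I \<and> (\<forall>x\<in>I. \<forall>y\<in>I. x + y \<in> I) \<and> (\<forall>x\<in>I. \<forall>r. r * x \<in> I)"

definition trop_poly :: "('k::field \<Rightarrow> trop) \<Rightarrow> ('m \<Rightarrow>\<^sub>0 'k) \<Rightarrow> ('m \<Rightarrow>\<^sub>0 trop)" where
  "trop_poly v f = Poly_Mapping.map v f"

definition bend_relations ::
  "('k::field \<Rightarrow> trop) \<Rightarrow> ('m::comm_monoid_add \<Rightarrow>\<^sub>0 'k) set \<Rightarrow> (('m \<Rightarrow>\<^sub>0 trop) \<times> ('m \<Rightarrow>\<^sub>0 trop)) set" where
  "bend_relations v I =
     {(trop_poly v f, trop_poly v (f - Poly_Mapping.single m (Poly_Mapping.lookup f m))) | f m.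
        f \<in> I \<and> m \<in> Poly_Mapping.keys f}"

inductive cong_gen :: "('a \<times> 'a) set \<Rightarrow> 'a::comm_semiring_1 \<Rightarrow> 'a \<Rightarrow> bool"
  for R where
  base: "(x, y) \<in> R \<Longrightarrow> cong_gen R x y"
| refl: "cong_gen R x x"
| sym: "cong_gen R x y \<Longrightarrow> cong_gen R y x"
| trans: "cong_gen R x y \<Longrightarrow> cong_gen R y z \<Longrightarrow> cong_gen R x z"
| add: "cong_gen R x y \<Longrightarrow> cong_gen R (x + z) (y + z)"
| mult: "cong_gen R x y \<Longrightarrow> cong_gen R (x * z) (y * z)"

text \<open>Equality in A = T[M] / (bend relations of I).\<close>
definition trop_eq ::
  "('k::field \<Rightarrow> trop) \<Rightarrow> ('m::comm_monoid_add \<Rightarrow>\<^sub>0 'k) set \<Rightarrow> ('m \<Rightarrow>\<^sub>0 trop) \<Rightarrow> ('m \<Rightarrow>\<^sub>0 trop) \<Rightarrow> bool" where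
  "trop_eq v I = cong_gen (bend_relations v I)"

end

theory Submission
  imports Defs
begin

text \<open>The zero class of \<open>A\<close> is \<open>{0}\<close>, so a zero divisor of \<open>A\<close> would be one of \<open>\<T>[M]\<close>.
  Since \<open>\<T>\<close> is zero-sum-free and has no zero divisors, so is \<open>\<T>[M]\<close>: the coefficient of
  \<open>[m + m']\<close> in \<open>x y\<close> is a maximum in which \<open>x\<^sub>m + y\<^sub>m\<^sub>'\<close> occurs. Therefore
  \<open>{0}\<close> is a class of every semiring congruence generated by pairs of nonzero elements, and
  both sides of a bend relation are nonzero: an element of \<open>I\<close> with one term removed cannot
  vanish, as otherwise \<open>I\<close> would contain a nonzero multiple of a monomial, hence a monomial.\<close>

instance trop :: dioid
proof
  fix a b :: trop
  show "a \<le> b \<longleftrightarrow> (\<exists>c. b = a + c)"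
    by (cases a; cases b) (auto simp: plus_trop_def max_def zero_trop_def)
qed

instance trop :: semiring_no_zero_divisors
proof
  fix a b :: trop
  show "a \<noteq> 0 \<Longrightarrow> b \<noteq> 0 \<Longrightarrow> a * b \<noteq> 0"
    by (cases a; cases b) (auto simp: zero_trop_def)
qed

lemma Sum_any_eq_0_iff:
  fixes f :: "'a \<Rightarrow> 'b::canonically_ordered_monoid_add"
  assumes "finite {a. f a \<noteq> 0}"
  shows "Sum_any f = 0 \<longleftrightarrow> (\<forall>a. f a = 0)"
  using assms by (auto simp: Sum_any.expand_set)

lemma poly_mapping_add_eq_0_iff:
  fixes x y :: "'a \<Rightarrow>\<^sub>0 'b::canonically_ordered_monoid_add"
  shows "x + y = 0 \<longleftrightarrow> x = 0 \<and> y = 0"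
  by (simp add: poly_mapping_eq_iff fun_eq_iff plus_poly_mapping.rep_eq all_conj_distrib)

lemma poly_mapping_mult_eq_0_iff:
  fixes x y :: "'a::comm_monoid_add \<Rightarrow>\<^sub>0 'b::{canonically_ordered_monoid_add, semiring_no_zero_divisors}"
  shows "x * y = 0 \<longleftrightarrow> x = 0 \<or> y = 0"
proof
  assume "x * y = 0"
  show "x = 0 \<or> y = 0"
  proof (rule ccontr)
    assume "\<not> (x = 0 \<or> y = 0)"
    then obtain a b where a: "Poly_Mapping.lookup x a \<noteq> 0" and b: "Poly_Mapping.lookup y b \<noteq> 0"
      by (metis in_keys_iff keys_eq_empty ex_in_conv)
    define summand where "summand = (\<lambda>(c, d).
      Poly_Mapping.lookup x c * Poly_Mapping.lookup y d when a + b = c + d)"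
    have "{p. summand p \<noteq> 0} \<subseteq>
        {c. Poly_Mapping.lookup x c \<noteq> 0} \<times> {d. Poly_Mapping.lookup y d \<noteq> 0}"
      by (auto simp: summand_def)
    moreover have "finite {c. Poly_Mapping.lookup x c \<noteq> 0}" "finite {d. Poly_Mapping.lookup y d \<noteq> 0}"
      by (simp_all add: Poly_Mapping.keys.rep_eq[symmetric])
    ultimately have fin_summand: "finite {p. summand p \<noteq> 0}"
      by (rule finite_subset[OF _ finite_cartesian_product])
    have "summand (a, b) \<noteq> 0"
      using a b by (simp add: summand_def)
    then have "Sum_any summand \<noteq> 0"
      using Sum_any_eq_0_iff[OF fin_summand] by blast
    moreover have "Poly_Mapping.lookup (x * y) (a + b) = Sum_any summand"
      unfolding summand_def by (transfer fixing: a b) (simp add: prod_fun_unfold_prod)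
    ultimately show False
      using \<open>x * y = 0\<close> by simp
  qed
qed auto

lemma cong_gen_eq_0_iff:
  fixes R :: "('a::comm_semiring_1 \<times> 'a) set"
  assumes "cong_gen R x y"
    and zero_sum_free: "\<And>a b :: 'a. a + b = 0 \<longleftrightarrow> a = 0 \<and> b = 0"
    and no_zero_divisors: "\<And>a b :: 'a. a * b = 0 \<longleftrightarrow> a = 0 \<or> b = 0"
    and "\<forall>(a, b)\<in>R. a = 0 \<longleftrightarrow> b = 0"
  shows "x = 0 \<longleftrightarrow> y = 0"
  using assms(1,4) by (induction rule: cong_gen.induct) (auto simp: zero_sum_free no_zero_divisors)

lemma trop_poly_eq_0_iff:
  assumes "valuation v"
  shows "trop_poly v f = 0 \<longleftrightarrow> f = 0"
  using assms unfolding trop_poly_def valuation_def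
  by (auto simp: map_eq_zero_iff zero_trop_def in_keys_iff intro: poly_mapping_eqI)

lemma ideal_single_mem_imp_eq_0:
  fixes I :: "('m::comm_monoid_add \<Rightarrow>\<^sub>0 'k::field) set"
  assumes "is_ideal I"
    and "\<forall>m. Poly_Mapping.single m 1 \<notin> I"
    and "Poly_Mapping.single m c \<in> I"
  shows "c = 0"
proof (rule ccontr)
  assume "c \<noteq> 0"
  then have "Poly_Mapping.single 0 (inverse c) * Poly_Mapping.single m c = Poly_Mapping.single m 1"
    by (simp add: mult_single)
  moreover have "Poly_Mapping.single 0 (inverse c) * Poly_Mapping.single m c \<in> I"
    using assms(1,3) unfolding is_ideal_def by blast
  ultimately show False
    using assms(2) by metis
qed

lemma bend_relations_nonzero:
  assumes "valuation v"
    and "is_ideal I"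
    and "\<forall>m. Poly_Mapping.single m 1 \<notin> I"
    and "(a, b) \<in> bend_relations v I"
  shows "a \<noteq> 0 \<and> b \<noteq> 0"
proof -
  obtain f m where f: "f \<in> I" and m: "m \<in> Poly_Mapping.keys f"
    and a: "a = trop_poly v f"
    and b: "b = trop_poly v (f - Poly_Mapping.single m (Poly_Mapping.lookup f m))"
    using assms(4) unfolding bend_relations_def by auto
  have "f \<noteq> 0"
    using m by auto
  moreover have "f - Poly_Mapping.single m (Poly_Mapping.lookup f m) \<noteq> 0"
  proof
    assume "f - Poly_Mapping.single m (Poly_Mapping.lookup f m) = 0"
    then have "Poly_Mapping.single m (Poly_Mapping.lookup f m) \<in> I"
      using f by simp
    then show False
      using ideal_single_mem_imp_eq_0[OF assms(2,3)] m by (simp add: in_keys_iff)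
  qed
  ultimately show ?thesis
    by (simp add: a b trop_poly_eq_0_iff[OF assms(1)])
qed

lemma trop_eq_0_iff:
  fixes x :: "'m::comm_monoid_add \<Rightarrow>\<^sub>0 trop"
  assumes "valuation v"
    and "is_ideal I"
    and "\<forall>m. Poly_Mapping.single m 1 \<notin> I"
  shows "trop_eq v I x 0 \<longleftrightarrow> x = 0"
proof
  assume "trop_eq v I x 0"
  moreover have "\<forall>(a, b)\<in>bend_relations v I. a = 0 \<longleftrightarrow> b = 0"
    using bend_relations_nonzero[OF assms] by fastforce
  ultimately have "x = 0 \<longleftrightarrow> (0 :: 'm \<Rightarrow>\<^sub>0 trop) = 0"
    unfolding trop_eq_def
    by (rule cong_gen_eq_0_iff[OF _ poly_mapping_add_eq_0_iff poly_mapping_mult_eq_0_iff])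
  then show "x = 0"
    by simp
qed (simp add: trop_eq_def cong_gen.refl)

theorem proposition5p8:
  fixes v :: "'k::field \<Rightarrow> trop"
    and I :: "('m::comm_monoid_add \<Rightarrow>\<^sub>0 'k) set"
  assumes "valuation v"
    and "is_ideal I"
    and "\<forall>m. Poly_Mapping.single m 1 \<notin> I"
  shows "(\<forall>x y. trop_eq v I (x * y) 0 \<longrightarrow> trop_eq v I x 0 \<or> trop_eq v I y 0)
       \<and> (\<forall>x y. (\<exists>n. trop_eq v I ((x * y) ^ n) 0) \<longrightarrow>
                 (\<exists>n. trop_eq v I (x ^ n) 0) \<or> (\<exists>n. trop_eq v I (y ^ n) 0))"
  using trop_eq_0_iff[OF assms] poly_mapping_mult_eq_0_iff
  by (auto simp: power_mult_distrib)

end
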